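(* Let $H$ be a hypergraph with $R(H)=\{1,2\}$, and let $H^2$ be the graph formed by its $2$-edges. If $H^2$ is not bipartite, then \[\pi(H)=1+\pi(H^2)=2-\frac{1}{\chi(H^2)-1},\] where $\chi(H^2)$ is the chromatic number of $H^2$.
   Context: A hypergraph $H=(V,E)$ has finite vertex set $V$ and edge set $E\subseteq 2^V$; $R(H)=\{|F|:F\in E\}$. $H_1\subseteq H_2$ means there is an injective $f\colon V(H_1)\to V(H_2)$ with $f(F)\in E(H_2)$ for all $F\in E(H_1)$. For $G$ on $n$ vertices, $h_n(G)=\sum_{F\in E(G)}1/\binom{n}{|F|}$; $\pi_n(H)=\max\{h_n(G): G\text{ on } n \text{ vertices}, R(G)\subseteq R(H), H\not\subseteq G\}$ and $\pi(H)=\lim_n\pi_n(H)$; for a graph this is the usual Turán density. *)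

theory Defs
  imports Complex_Main
begin

definition hypergraph :: "'a set \<Rightarrow> 'a set set \<Rightarrow> bool" where
  "hypergraph V E \<longleftrightarrow> finite V \<and> E \<subseteq> Pow V"

definition edge_sizes :: "'a set set \<Rightarrow> nat set" where
  "edge_sizes E = card ` E"

definition hyp_sub :: "'a set \<Rightarrow> 'a set set \<Rightarrow> 'b set \<Rightarrow> 'b set set \<Rightarrow> bool" where
  "hyp_sub V1 E1 V2 E2 \<longleftrightarrow>
     (\<exists>f. inj_on f V1 \<and> f ` V1 \<subseteq> V2 \<and> (\<forall>F\<in>E1. f ` F \<in> E2))"

definition lubell :: "nat \<Rightarrow> nat set set \<Rightarrow> real" where
  "lubell n G = (\<Sum>F\<in>G. 1 / real (n choose card F))"

definition pi_n :: "'a set \<Rightarrow> 'a set set \<Rightarrow> nat \<Rightarrow> real" where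
  "pi_n V E n = Max {lubell n G | G. G \<subseteq> Pow {0..<n} \<and> edge_sizes G \<subseteq> edge_sizes E
                                     \<and> \<not> hyp_sub V E {0..<n} G}"

definition two_edges :: "'a set set \<Rightarrow> 'a set set" where
  "two_edges E = {F \<in> E. card F = 2}"

definition colourable :: "'a set \<Rightarrow> 'a set set \<Rightarrow> nat \<Rightarrow> bool" where
  "colourable V E k \<longleftrightarrow>
     (\<exists>c. c ` V \<subseteq> {..<k} \<and> (\<forall>F\<in>E. \<forall>x\<in>F. \<forall>y\<in>F. x \<noteq> y \<longrightarrow> c x \<noteq> c y))"

definition bipartite :: "'a set \<Rightarrow> 'a set set \<Rightarrow> bool" where
  "bipartite V E \<longleftrightarrow> colourable V E 2"

definition chromatic_number :: "'a set \<Rightarrow> 'a set set \<Rightarrow> nat" where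
  "chromatic_number V E = (LEAST k. colourable V E k)"

end

theory Submission
  imports Defs "HOL-Library.FuncSet"
begin

text \<open>Write \<open>\<chi>(H\<^sup>2) = r + 1\<close> and measure graphs on \<open>n\<close> vertices by their ordered adjacent pairs,
  so that the 2-edges contribute density \<open>arcs / (n (n - 1))\<close> to the Lubell function.
  Lower bounds: the Turan graph with \<open>r\<close> parts (plus all singletons, if \<open>H\<close> has 1-edges) contains
  no copy of \<open>H\<close>, since a copy would \<open>r\<close>-colour \<open>H\<^sup>2\<close> by residues mod \<open>r\<close>; its density is \<open>1 - 1/r\<close>.
  Upper bounds: by the Erdos-Stone theorem, proved in its minimum-degree form by induction on the
  number of parts and transferred to edge density by deleting low-degree vertices, any graph of
  density \<open>1 - 1/r + \<epsilon>\<close> contains a blown-up \<open>K\<^sub>r\<^sub>+\<^sub>1\<close> with parts of size \<open>|V|\<close>, which hosts \<open>H\<close>.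
  With 1-edges, Erdos-Stone is applied only on the set \<open>S\<close> of singleton edges of a candidate;
  as \<open>r \<ge> 2\<close>, the resulting bound in \<open>|S|/n\<close> is largest for \<open>S\<close> the whole vertex set, giving \<open>1 + (1 - 1/r)\<close>.\<close>

section \<open>The Erdos-Stone theorem\<close>

definition degree :: "('v \<Rightarrow> 'v \<Rightarrow> bool) \<Rightarrow> 'v set \<Rightarrow> 'v \<Rightarrow> nat" where
  "degree adj W x = card {y\<in>W. adj x y}"

definition arc_count :: "('v \<Rightarrow> 'v \<Rightarrow> bool) \<Rightarrow> 'v set \<Rightarrow> nat" where
  "arc_count adj W = card {(x, y). x \<in> W \<and> y \<in> W \<and> adj x y}"

text \<open>A blow-up of \<open>K\<^sub>p\<^sub>+\<^sub>1\<close>: the parts are indexed by \<open>{..p}\<close>.\<close>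
definition has_clique_blowup :: "('v \<Rightarrow> 'v \<Rightarrow> bool) \<Rightarrow> 'v set \<Rightarrow> nat \<Rightarrow> nat \<Rightarrow> bool" where
  "has_clique_blowup adj W p t \<longleftrightarrow> (\<exists>P. (\<forall>i\<le>p. P i \<subseteq> W \<and> card (P i) = t) \<and>
      (\<forall>i\<le>p. \<forall>j\<le>p. i \<noteq> j \<longrightarrow> (\<forall>x\<in>P i. \<forall>y\<in>P j. adj x y)))"

lemma has_clique_blowup_mono:
  assumes "W' \<subseteq> W" "has_clique_blowup adj W' p t"
  shows "has_clique_blowup adj W p t"
proof -
  obtain P where "\<forall>i\<le>p. P i \<subseteq> W' \<and> card (P i) = t"
    and "\<forall>i\<le>p. \<forall>j\<le>p. i \<noteq> j \<longrightarrow> (\<forall>x\<in>P i. \<forall>y\<in>P j. adj x y)"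
    using assms(2) unfolding has_clique_blowup_def by auto
  moreover have "P i \<subseteq> W' \<Longrightarrow> P i \<subseteq> W" for i by (rule order_trans[OF _ assms(1)])
  ultimately show ?thesis
    unfolding has_clique_blowup_def by (intro exI[of _ P]) auto
qed

lemma has_clique_blowup_Suc:
  assumes sym: "\<And>x y. adj x y \<Longrightarrow> adj y x"
    and A: "\<And>i. i \<le> p \<Longrightarrow> A i \<subseteq> W \<and> card (A i) = t"
    and A_joined: "\<And>i j x y. i \<le> p \<Longrightarrow> j \<le> p \<Longrightarrow> i \<noteq> j \<Longrightarrow> x \<in> A i \<Longrightarrow> y \<in> A j \<Longrightarrow> adj x y"
    and Q: "Q \<subseteq> W" "card Q = t"
    and Q_joined: "\<And>w i u. w \<in> Q \<Longrightarrow> i \<le> p \<Longrightarrow> u \<in> A i \<Longrightarrow> adj w u"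
  shows "has_clique_blowup adj W (Suc p) t"
  unfolding has_clique_blowup_def
proof (intro exI[of _ "\<lambda>i. if i \<le> p then A i else Q"] conjI allI impI ballI)
  fix i assume "i \<le> Suc p"
  then show "(if i \<le> p then A i else Q) \<subseteq> W" "card (if i \<le> p then A i else Q) = t"
    using A Q by auto
next
  fix i j x y assume ij: "i \<le> Suc p" "j \<le> Suc p" "i \<noteq> j"
    and x: "x \<in> (if i \<le> p then A i else Q)" and y: "y \<in> (if j \<le> p then A j else Q)"
  consider "i \<le> p" "j \<le> p" | "i \<le> p" "\<not> j \<le> p" | "\<not> i \<le> p" "j \<le> p"
    using ij by linarith
  then show "adj x y"
  proof cases
    case 1
    then have "x \<in> A i" "y \<in> A j" using x y by simp_all
    then show ?thesis using A_joined 1 ij(3) by blast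
  next
    case 2
    then have "x \<in> A i" "y \<in> Q" using x y by simp_all
    then show ?thesis using Q_joined 2(1) sym by blast
  next
    case 3
    then have "x \<in> Q" "y \<in> A j" using x y by simp_all
    then show ?thesis using Q_joined 3(2) by blast
  qed
qed

lemma rich_vertices_double_count:
  fixes adj :: "'v \<Rightarrow> 'v \<Rightarrow> bool"
  assumes sym: "\<And>x y. adj x y \<Longrightarrow> adj y x" and W: "finite W"
    and P: "\<And>i. i \<le> p \<Longrightarrow> P i \<subseteq> W \<and> card (P i) = T"
    and min_degree: "\<And>x. x \<in> W \<Longrightarrow> d \<le> real (degree adj W x)"
  shows "real (Suc p * T) * d
    \<le> real (card {w\<in>W. \<forall>i\<le>p. t \<le> card {u\<in>P i. adj w u}} * (Suc p * T) + card W * (p * T + t))"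
proof -
  define c where "c w i = card {u\<in>P i. adj w u}" for w i
  define Good where "Good = {w\<in>W. \<forall>i\<le>p. t \<le> c w i}"
  have finP: "finite (P i)" if "i \<le> p" for i
    using P[OF that] W finite_subset by blast
  have card_filter: "card {y\<in>S. Q y} = (\<Sum>y\<in>S. if Q y then 1 else 0)" if "finite S" for S and Q :: "'v \<Rightarrow> bool"
    using that by (simp add: sum.If_cases Int_def)
  have degree_sum: "degree adj W u = (\<Sum>w\<in>W. if adj w u then 1 else 0)" for u
  proof -
    have "{y\<in>W. adj u y} = {y\<in>W. adj y u}" using sym by blast
    then show ?thesis unfolding degree_def by (simp add: card_filter[OF W])
  qed
  have "(\<Sum>i\<le>p. \<Sum>u\<in>P i. degree adj W u) = (\<Sum>i\<le>p. \<Sum>w\<in>W. \<Sum>u\<in>P i. if adj w u then 1 else 0)"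
    unfolding degree_sum by (intro sum.cong refl sum.swap)
  also have "\<dots> = (\<Sum>w\<in>W. \<Sum>i\<le>p. c w i)"
    by (subst sum.swap) (simp add: c_def card_filter finP)
  finally have swap: "(\<Sum>i\<le>p. \<Sum>u\<in>P i. degree adj W u) = (\<Sum>w\<in>W. \<Sum>i\<le>p. c w i)" .
  have c_le: "c w i \<le> T" if "i \<le> p" for w i
    unfolding c_def using P[OF that] finP[OF that] by (metis (no_types, lifting) card_mono mem_Collect_eq subsetI)
  have per_vertex: "(\<Sum>i\<le>p. c w i) \<le> (if w \<in> Good then Suc p * T else 0) + (p * T + t)"
    if w: "w \<in> W" for w
  proof (cases "w \<in> Good")
    case True
    have "(\<Sum>i\<le>p. c w i) \<le> (\<Sum>i\<le>p. T)" using c_le by (intro sum_mono) auto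
    then show ?thesis using True by simp
  next
    case False
    then obtain i0 where i0: "i0 \<le> p" "c w i0 < t" using w unfolding Good_def by force
    have "(\<Sum>i\<le>p. c w i) = c w i0 + (\<Sum>i\<in>{..p}-{i0}. c w i)"
      using i0 by (simp add: sum.remove)
    also have "(\<Sum>i\<in>{..p}-{i0}. c w i) \<le> (\<Sum>i\<in>{..p}-{i0}. T)" using c_le by (intro sum_mono) auto
    also have "\<dots> = p * T" using i0 by simp
    finally show ?thesis using False i0 by simp
  qed
  have "real (Suc p * T) * d = (\<Sum>i\<le>p. \<Sum>u\<in>P i. d)"
    using P by (simp add: algebra_simps)
  also have "\<dots> \<le> (\<Sum>i\<le>p. \<Sum>u\<in>P i. real (degree adj W u))"
    using min_degree P by (intro sum_mono) blast
  also have "\<dots> = real (\<Sum>w\<in>W. \<Sum>i\<le>p. c w i)"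
    by (simp flip: swap)
  also have "(\<Sum>w\<in>W. \<Sum>i\<le>p. c w i) \<le> (\<Sum>w\<in>W. (if w \<in> Good then Suc p * T else 0) + (p * T + t))"
    using per_vertex by (intro sum_mono) auto
  also have "\<dots> = card Good * (Suc p * T) + card W * (p * T + t)"
    using W by (simp add: sum.distrib sum.If_cases Good_def Int_def)
  finally show ?thesis unfolding Good_def c_def by simp
qed

lemma many_rich_vertices:
  fixes adj :: "'v \<Rightarrow> 'v \<Rightarrow> bool"
  assumes sym: "\<And>x y. adj x y \<Longrightarrow> adj y x" and W: "finite W"
    and P: "\<And>i. i \<le> p \<Longrightarrow> P i \<subseteq> W \<and> card (P i) = T"
    and T: "0 < T" and T_large: "2 * real t \<le> (real p + 1) * \<epsilon> * real T"
    and min_degree: "\<forall>x\<in>W. ((real (Suc p) - 1) / real (Suc p) + \<epsilon>) * real (card W) \<le> real (degree adj W x)"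
  shows "\<epsilon> * real (card W) / 2 \<le> real (card {w\<in>W. \<forall>i\<le>p. t \<le> card {u\<in>P i. adj w u}})"
proof -
  define n where "n = card W"
  define Good where "Good = {w\<in>W. \<forall>i\<le>p. t \<le> card {u\<in>P i. adj w u}}"
  have "real (Suc p * T) * (((real (Suc p) - 1) / real (Suc p) + \<epsilon>) * real n)
      \<le> real (card Good * (Suc p * T) + n * (p * T + t))"
    unfolding Good_def n_def
    by (rule rich_vertices_double_count) (use sym W P min_degree in auto)
  moreover have "real (Suc p * T) * (((real (Suc p) - 1) / real (Suc p) + \<epsilon>) * real n)
      = real p * real T * real n + real (Suc p) * real T * \<epsilon> * real n"
    by (simp add: field_simps)
  ultimately have "real (Suc p) * real T * \<epsilon> * real n - real n * real t
      \<le> real (card Good) * (real (Suc p) * real T)"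
    by (simp add: algebra_simps)
  moreover have "real n * real t \<le> real n * ((real p + 1) * \<epsilon> * real T / 2)"
    using T_large by (intro mult_left_mono) auto
  ultimately have "(\<epsilon> * real n / 2) * (real (Suc p) * real T) \<le> real (card Good) * (real (Suc p) * real T)"
    by (simp add: algebra_simps)
  moreover have "0 < real (Suc p) * real T" using T by simp
  ultimately have "\<epsilon> * real n / 2 \<le> real (card Good)"
    by (meson mult_le_cancel_right_pos)
  then show ?thesis unfolding Good_def n_def .
qed

text \<open>Pigeonhole over the choices of \<open>t\<close> neighbours in each part: \<open>t\<close> rich vertices make the same choice.\<close>
lemma has_clique_blowup_extend:
  fixes adj :: "'v \<Rightarrow> 'v \<Rightarrow> bool"
  assumes sym: "\<And>x y. adj x y \<Longrightarrow> adj y x" and W: "finite W"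
    and P: "\<And>i. i \<le> p \<Longrightarrow> P i \<subseteq> W \<and> card (P i) = T"
    and P_joined: "\<And>i j x y. i \<le> p \<Longrightarrow> j \<le> p \<Longrightarrow> i \<noteq> j \<Longrightarrow> x \<in> P i \<Longrightarrow> y \<in> P j \<Longrightarrow> adj x y"
    and many: "(T choose t) ^ Suc p * (t - 1) < card {w\<in>W. \<forall>i\<le>p. t \<le> card {u\<in>P i. adj w u}}"
  shows "has_clique_blowup adj W (Suc p) t"
proof -
  define Good where "Good = {w\<in>W. \<forall>i\<le>p. t \<le> card {u\<in>P i. adj w u}}"
  define B where "B = PiE {..p} (\<lambda>i. {A. A \<subseteq> P i \<and> card A = t})"
  define sel where "sel w i = (SOME A. A \<subseteq> {u\<in>P i. adj w u} \<and> card A = t)" for w i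
  have finP: "finite (P i)" if "i \<le> p" for i
    using P[OF that] W finite_subset by blast
  have finB: "finite B" unfolding B_def using finP by (intro finite_PiE) auto
  have cardB: "card B = (T choose t) ^ Suc p"
  proof -
    have "card B = (\<Prod>i\<le>p. card {A. A \<subseteq> P i \<and> card A = t})" unfolding B_def by (simp add: card_PiE)
    also have "\<dots> = (\<Prod>i\<le>p. T choose t)" using finP P by (intro prod.cong refl) (simp add: n_subsets)
    finally show ?thesis by simp
  qed
  have sel: "sel w i \<subseteq> {u\<in>P i. adj w u} \<and> card (sel w i) = t" if "w \<in> Good" "i \<le> p" for w i
  proof -
    have "t \<le> card {u\<in>P i. adj w u}" using that unfolding Good_def by auto
    then obtain A where "A \<subseteq> {u\<in>P i. adj w u}" "card A = t" using obtain_subset_with_card_n by metis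
    then show ?thesis unfolding sel_def by (rule someI[where P="\<lambda>A. A \<subseteq> {u\<in>P i. adj w u} \<and> card A = t", OF conjI])
  qed
  have choice: "(\<lambda>w. restrict (sel w) {..p}) \<in> Good \<rightarrow> B"
  proof
    fix w assume "w \<in> Good"
    then have "sel w i \<subseteq> P i \<and> card (sel w i) = t" if "i \<le> p" for i
      using sel[of w i] that by auto
    then show "restrict (sel w) {..p} \<in> B" unfolding B_def by auto
  qed
  have finGood: "finite Good" using W unfolding Good_def by simp
  have "0 < card Good" using many unfolding Good_def by linarith
  then have "Good \<noteq> {}" by auto
  then have "B \<noteq> {}" using choice by blast
  then obtain b where b: "b \<in> B"
    "card Good \<le> card ((\<lambda>w. restrict (sel w) {..p}) -` {b} \<inter> Good) * card B"
    using pigeonhole_card[OF choice finGood finB] by auto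
  define Q0 where "Q0 = (\<lambda>w. restrict (sel w) {..p}) -` {b} \<inter> Good"
  have "card B * (t - 1) < card Good"
    using many cardB unfolding Good_def by (simp add: mult.commute)
  also have "\<dots> \<le> card B * card Q0"
    using b(2) unfolding Q0_def by (simp add: mult.commute)
  finally have "t - 1 < card Q0" by simp
  then have "t \<le> card Q0" by linarith
  then obtain Q where Q: "Q \<subseteq> Q0" "card Q = t" using obtain_subset_with_card_n by metis
  have b_part: "b i \<subseteq> P i \<and> card (b i) = t" if "i \<le> p" for i
    using b(1) that unfolding B_def by auto
  have Q_joined: "adj w u" if "w \<in> Q" "i \<le> p" "u \<in> b i" for w i u
  proof -
    have "w \<in> Good" "b i = sel w i" using Q(1) that(1,2) unfolding Q0_def by auto
    then have "b i \<subseteq> {u\<in>P i. adj w u}" using sel that(2) by simp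
    then show ?thesis using that(3) by blast
  qed
  show ?thesis
  proof (rule has_clique_blowup_Suc[OF sym _ _ _ Q(2) Q_joined])
    show "b i \<subseteq> W \<and> card (b i) = t" if "i \<le> p" for i using b_part[OF that] P[OF that] by auto
    show "adj x y" if "i \<le> p" "j \<le> p" "i \<noteq> j" "x \<in> b i" "y \<in> b j" for i j x y
      using that b_part P_joined by blast
    show "Q \<subseteq> W" using Q(1) unfolding Q0_def Good_def by auto
  qed
qed

text \<open>For \<open>p = 0\<close> the degree threshold is \<open>\<epsilon>\<close>, as \<open>(-1) / 0 = 0\<close>.\<close>
lemma erdos_stone_min_degree:
  assumes "0 < \<epsilon>"
  shows "\<exists>N. \<forall>(adj :: 'v \<Rightarrow> 'v \<Rightarrow> bool) W. (\<forall>x y. adj x y \<longrightarrow> adj y x) \<longrightarrow> finite W \<longrightarrow>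
     N \<le> card W \<longrightarrow> (\<forall>x\<in>W. ((real p - 1) / real p + \<epsilon>) * real (card W) \<le> real (degree adj W x)) \<longrightarrow>
     has_clique_blowup adj W p t"
  using assms
proof (induction p arbitrary: t)
  case 0
  show ?case
  proof (intro exI[of _ t] allI impI)
    fix adj :: "'v \<Rightarrow> 'v \<Rightarrow> bool" and W :: "'v set"
    assume "finite W" "t \<le> card W"
    then obtain A where "A \<subseteq> W" "card A = t" using obtain_subset_with_card_n by metis
    then show "has_clique_blowup adj W 0 t"
      unfolding has_clique_blowup_def by (intro exI[of _ "\<lambda>_. A"]) auto
  qed
next
  case (Suc p)
  define T :: nat where "T = nat \<lceil>2 * real t / ((real p + 1) * \<epsilon>)\<rceil> + 1"
  have T_pos: "0 < T" unfolding T_def by simp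
  have T_large: "2 * real t \<le> (real p + 1) * \<epsilon> * real T"
  proof -
    have "2 * real t / ((real p + 1) * \<epsilon>) \<le> real T" unfolding T_def by linarith
    then show ?thesis using Suc.prems by (simp add: divide_le_eq mult.commute)
  qed
  obtain N0 where N0: "\<forall>(adj :: 'v \<Rightarrow> 'v \<Rightarrow> bool) W. (\<forall>x y. adj x y \<longrightarrow> adj y x) \<longrightarrow> finite W \<longrightarrow>
      N0 \<le> card W \<longrightarrow> (\<forall>x\<in>W. ((real p - 1) / real p + \<epsilon>) * real (card W) \<le> real (degree adj W x)) \<longrightarrow>
      has_clique_blowup adj W p T"
    using Suc.IH[of T] Suc.prems by blast
  define K :: nat where "K = (T choose t) ^ Suc p"
  define N where "N = max N0 (nat \<lceil>2 * real t * real K / \<epsilon>\<rceil> + 1)"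
  show ?case
  proof (intro exI[of _ N] allI impI)
    fix adj :: "'v \<Rightarrow> 'v \<Rightarrow> bool" and W :: "'v set"
    assume sym: "\<forall>x y. adj x y \<longrightarrow> adj y x" and W: "finite W" "N \<le> card W"
      and min_degree: "\<forall>x\<in>W. ((real (Suc p) - 1) / real (Suc p) + \<epsilon>) * real (card W) \<le> real (degree adj W x)"
    define n where "n = card W"
    have "(real p - 1) / real p \<le> (real (Suc p) - 1) / real (Suc p)"
    proof (cases "p = 0")
      case False
      then have "0 < real p" by simp
      then show ?thesis by (simp add: divide_simps) (simp add: algebra_simps)
    qed simp
    then have "((real p - 1) / real p + \<epsilon>) * real n \<le> ((real (Suc p) - 1) / real (Suc p) + \<epsilon>) * real n"
      by (intro mult_right_mono) auto
    then have "\<forall>x\<in>W. ((real p - 1) / real p + \<epsilon>) * real (card W) \<le> real (degree adj W x)"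
      using min_degree unfolding n_def by (meson order_trans)
    moreover have "N0 \<le> card W" using W(2) unfolding N_def by simp
    ultimately have "has_clique_blowup adj W p T" using N0 W(1) sym by blast
    then obtain P where P_all: "\<forall>i\<le>p. P i \<subseteq> W \<and> card (P i) = T"
      and P_joined_all: "\<forall>i\<le>p. \<forall>j\<le>p. i \<noteq> j \<longrightarrow> (\<forall>x\<in>P i. \<forall>y\<in>P j. adj x y)"
      unfolding has_clique_blowup_def by blast
    have P: "\<And>i. i \<le> p \<Longrightarrow> P i \<subseteq> W \<and> card (P i) = T" using P_all by blast
    have P_joined: "\<And>i j x y. i \<le> p \<Longrightarrow> j \<le> p \<Longrightarrow> i \<noteq> j \<Longrightarrow> x \<in> P i \<Longrightarrow> y \<in> P j \<Longrightarrow> adj x y"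
      using P_joined_all by blast
    define Good where "Good = {w\<in>W. \<forall>i\<le>p. t \<le> card {u\<in>P i. adj w u}}"
    have Good_large: "\<epsilon> * real n / 2 \<le> real (card Good)"
      unfolding Good_def n_def
      by (rule many_rich_vertices[where P = P and T = T and t = t, OF sym[rule_format] W(1) P T_pos T_large min_degree])
    have "2 * real t * real K / \<epsilon> < real n"
      using W(2) unfolding N_def n_def by linarith
    then have "real t * real K < \<epsilon> * real n / 2"
      using Suc.prems by (simp add: field_simps)
    then have "K * t < card Good"
      using Good_large by (simp add: algebra_simps flip: of_nat_mult of_nat_less_iff)
    then have "K * (t - 1) < card Good"
      by (meson diff_le_self le_less_trans mult_le_mono2)
    then show "has_clique_blowup adj W (Suc p) t"
      using has_clique_blowup_extend[OF sym[rule_format] W(1) P P_joined] unfolding K_def Good_def by simp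
  qed
qed

lemma arc_count_finite: "finite W \<Longrightarrow> finite {(x, y). x \<in> W \<and> y \<in> W \<and> adj x y}"
  by (rule finite_subset[of _ "W \<times> W"]) auto

lemma arc_count_le_square:
  assumes "finite W"
  shows "arc_count adj W \<le> card W * card W"
proof -
  have "arc_count adj W \<le> card (W \<times> W)"
    unfolding arc_count_def using assms by (intro card_mono) auto
  then show ?thesis by (simp add: card_cartesian_product)
qed

lemma arc_count_remove_vertex:
  assumes sym: "\<And>x y. adj x y \<Longrightarrow> adj y x" and irrefl: "\<And>x. \<not> adj x x"
    and W: "finite W" and x: "x \<in> W"
  shows "arc_count adj W = arc_count adj (W - {x}) + 2 * degree adj W x"
proof -
  define N where "N = {y\<in>W. adj x y}"
  have split: "{(a, b). a \<in> W \<and> b \<in> W \<and> adj a b} =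
     {(a, b). a \<in> W - {x} \<and> b \<in> W - {x} \<and> adj a b} \<union> (Pair x ` N \<union> (\<lambda>y. (y, x)) ` N)"
    unfolding N_def using x sym by auto
  have finN: "finite N" unfolding N_def using W by simp
  have "card (Pair x ` N) = card N" "card ((\<lambda>y. (y, x)) ` N) = card N"
    by (auto intro!: card_image simp: inj_on_def)
  moreover have "Pair x ` N \<inter> (\<lambda>y. (y, x)) ` N = {}"
    using irrefl unfolding N_def by auto
  ultimately have "card (Pair x ` N \<union> (\<lambda>y. (y, x)) ` N) = card N + card N"
    using finN by (simp add: card_Un_disjoint)
  moreover have "arc_count adj W = arc_count adj (W - {x}) + card (Pair x ` N \<union> (\<lambda>y. (y, x)) ` N)"
    unfolding arc_count_def split
    using arc_count_finite[of "W - {x}" adj] W finN by (intro card_Un_disjoint) auto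
  ultimately show ?thesis unfolding degree_def N_def by simp
qed

text \<open>Deleting vertices of degree below \<open>c |W|\<close> keeps \<open>arc_count - c |W| (|W| + 1)\<close> from decreasing.\<close>
lemma exists_min_degree_subgraph:
  assumes sym: "\<And>x y. adj x y \<Longrightarrow> adj y x" and irrefl: "\<And>x. \<not> adj x x"
    and W: "finite W" and dense: "c * real (card W) * (real (card W) + 1) + D \<le> real (arc_count adj W)"
  shows "\<exists>W'\<subseteq>W. c * real (card W') * (real (card W') + 1) + D \<le> real (arc_count adj W') \<and>
    (\<forall>x\<in>W'. c * real (card W') \<le> real (degree adj W' x))"
  using W dense
proof (induction "card W" arbitrary: W rule: less_induct)
  case less
  show ?case
  proof (cases "\<forall>x\<in>W. c * real (card W) \<le> real (degree adj W x)")
    case True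
    then show ?thesis using less.prems by blast
  next
    case False
    then obtain x where x: "x \<in> W" "real (degree adj W x) < c * real (card W)" by force
    have card_W: "real (card W) = real (card (W - {x})) + 1"
      by (subst card_Suc_Diff1[OF less.prems(1) x(1), symmetric]) simp
    have "arc_count adj W = arc_count adj (W - {x}) + 2 * degree adj W x"
      using arc_count_remove_vertex[OF sym irrefl less.prems(1) x(1)] .
    then have "c * real (card (W - {x})) * (real (card (W - {x})) + 1) + D \<le> real (arc_count adj (W - {x}))"
      using less.prems(2) x(2) unfolding card_W by (simp add: algebra_simps)
    moreover have "card (W - {x}) < card W" using x(1) less.prems(1) by (meson card_Diff1_less)
    ultimately obtain W' where "W' \<subseteq> W - {x}"
        "c * real (card W') * (real (card W') + 1) + D \<le> real (arc_count adj W')"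
        "\<forall>x\<in>W'. c * real (card W') \<le> real (degree adj W' x)"
      using less.hyps less.prems(1) by (metis finite_Diff)
    then show ?thesis by blast
  qed
qed

lemma erdos_stone:
  assumes "0 < \<epsilon>"
  shows "\<exists>C\<ge>0. \<forall>(adj :: 'v \<Rightarrow> 'v \<Rightarrow> bool) W. (\<forall>x y. adj x y \<longrightarrow> adj y x) \<longrightarrow> (\<forall>x. \<not> adj x x) \<longrightarrow>
     finite W \<longrightarrow> \<not> has_clique_blowup adj W p t \<longrightarrow>
     real (arc_count adj W) \<le> ((real p - 1) / real p + \<epsilon>) * real (card W) * (real (card W) + 1) + C"
proof -
  from erdos_stone_min_degree[OF assms, of p t] obtain N where N: "\<forall>(adj :: 'v \<Rightarrow> 'v \<Rightarrow> bool) W.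
      (\<forall>x y. adj x y \<longrightarrow> adj y x) \<longrightarrow> finite W \<longrightarrow> N \<le> card W \<longrightarrow>
      (\<forall>x\<in>W. ((real p - 1) / real p + \<epsilon>) * real (card W) \<le> real (degree adj W x)) \<longrightarrow>
      has_clique_blowup adj W p t" ..
  define c where "c = (real p - 1) / real p + \<epsilon>"
  have c_nonneg: "0 \<le> c" unfolding c_def using assms by (cases "p = 0") auto
  show ?thesis
  proof (intro exI[of _ "real N * real N + 1"] conjI allI impI)
    fix adj :: "'v \<Rightarrow> 'v \<Rightarrow> bool" and W :: "'v set"
    assume sym: "\<forall>x y. adj x y \<longrightarrow> adj y x" and irrefl: "\<forall>x. \<not> adj x x"
      and W: "finite W" and no_blowup: "\<not> has_clique_blowup adj W p t"
    have sym': "\<And>x y. adj x y \<Longrightarrow> adj y x" and irrefl': "\<And>x. \<not> adj x x"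
      using sym irrefl by blast+
    show "real (arc_count adj W) \<le> ((real p - 1) / real p + \<epsilon>) * real (card W) * (real (card W) + 1)
        + (real N * real N + 1)"
    proof (rule ccontr)
      assume "\<not> ?thesis"
      then have "c * real (card W) * (real (card W) + 1) + (real N * real N + 1) \<le> real (arc_count adj W)"
        unfolding c_def by linarith
      from exists_min_degree_subgraph[OF sym' irrefl' W this] obtain W' where W': "W' \<subseteq> W"
        "c * real (card W') * (real (card W') + 1) + (real N * real N + 1) \<le> real (arc_count adj W')"
        "\<forall>x\<in>W'. c * real (card W') \<le> real (degree adj W' x)"
        by blast
      have finW': "finite W'" using W'(1) W by (rule finite_subset)
      have "0 \<le> c * real (card W') * (real (card W') + 1)" using c_nonneg by simp
      then have "real N * real N + 1 \<le> real (arc_count adj W')" using W'(2) by linarith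
      also have "\<dots> \<le> real (card W') * real (card W')"
        using arc_count_le_square[OF finW', of adj] by (simp flip: of_nat_mult)
      finally have "N * N < card W' * card W'" by (simp flip: of_nat_mult)
      then have "N \<le> card W'"
        by (meson mult_le_mono not_le order.strict_iff_not)
      then have "has_clique_blowup adj W' p t"
        using N sym finW' W'(3) unfolding c_def by blast
      then have "has_clique_blowup adj W p t" by (rule has_clique_blowup_mono[OF W'(1)])
      then show False using no_blowup by contradiction
    qed
  qed simp
qed

section \<open>The Lubell function of hypergraphs with edges of size 1 and 2\<close>

definition edge_adj :: "'v set set \<Rightarrow> 'v \<Rightarrow> 'v \<Rightarrow> bool" where
  "edge_adj G x y \<longleftrightarrow> x \<noteq> y \<and> {x, y} \<in> G"

definition singleton_vertices :: "nat set set \<Rightarrow> nat \<Rightarrow> nat set" where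
  "singleton_vertices G n = {x\<in>{0..<n}. {x} \<in> G}"

lemma edge_adj_sym: "edge_adj G x y \<Longrightarrow> edge_adj G y x"
  unfolding edge_adj_def by (auto simp: insert_commute)

lemma edge_adj_irrefl: "\<not> edge_adj G x x"
  unfolding edge_adj_def by simp

lemma arc_count_edge_adj:
  fixes W :: "'v :: linorder set"
  assumes W: "finite W" and G: "G \<subseteq> Pow W"
  shows "arc_count (edge_adj G) W = 2 * card {F\<in>G. card F = 2}"
proof -
  define Lo where "Lo = {(a, b). a \<in> W \<and> b \<in> W \<and> edge_adj G a b \<and> a < b}"
  define Hi where "Hi = {(a, b). a \<in> W \<and> b \<in> W \<and> edge_adj G a b \<and> b < a}"
  have arcs: "{(a, b). a \<in> W \<and> b \<in> W \<and> edge_adj G a b} = Lo \<union> Hi"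
    unfolding Lo_def Hi_def edge_adj_def by auto
  have fin: "finite Lo" "finite Hi"
    using arc_count_finite[OF W, of "edge_adj G"] unfolding arcs by auto
  have "Hi = prod.swap ` Lo"
    unfolding Hi_def Lo_def edge_adj_def by (auto simp: insert_commute image_iff)
  then have card_Hi: "card Hi = card Lo"
    by (simp add: card_image)
  have inj: "inj_on (\<lambda>(a, b). {a, b}) Lo"
    unfolding inj_on_def Lo_def by (auto simp: doubleton_eq_iff)
  have image: "(\<lambda>(a, b). {a, b}) ` Lo = {F\<in>G. card F = 2}"
  proof
    show "(\<lambda>(a, b). {a, b}) ` Lo \<subseteq> {F\<in>G. card F = 2}" unfolding Lo_def edge_adj_def by auto
  next
    show "{F\<in>G. card F = 2} \<subseteq> (\<lambda>(a, b). {a, b}) ` Lo"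
    proof
      fix F assume F: "F \<in> {F\<in>G. card F = 2}"
      then obtain x y where xy: "F = {x, y}" "x < y"
        by (auto simp: card_2_iff) (metis insert_commute linorder_neqE)
      have "F \<subseteq> W" using F G by auto
      then have "(x, y) \<in> Lo" using F xy unfolding Lo_def edge_adj_def by auto
      then show "F \<in> (\<lambda>(a, b). {a, b}) ` Lo" using xy(1) by (intro image_eqI[of _ _ "(x, y)"]) auto
    qed
  qed
  have "card Lo = card {F\<in>G. card F = 2}" using card_image[OF inj] image by simp
  moreover have "arc_count (edge_adj G) W = card Lo + card Hi"
    unfolding arc_count_def arcs using fin by (rule card_Un_disjoint) (auto simp: Lo_def Hi_def)
  ultimately show ?thesis using card_Hi by simp
qed

lemma lubell_12_graph:
  assumes G: "G \<subseteq> Pow {0..<n}" and sizes: "\<And>F. F \<in> G \<Longrightarrow> card F = 1 \<or> card F = 2" and n: "2 \<le> n"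
  shows "lubell n G = real (card (singleton_vertices G n)) / real n
    + real (arc_count (edge_adj G) {0..<n}) / (real n * (real n - 1))"
proof -
  have finG: "finite G" using G finite_subset by (metis finite_Pow_iff finite_atLeastLessThan)
  define G1 where "G1 = {F\<in>G. card F = 1}"
  define G2 where "G2 = {F\<in>G. card F = 2}"
  have G_split: "G = G1 \<union> G2" unfolding G1_def G2_def using sizes by auto
  have fin: "finite G1" "finite G2" using finG by (auto simp: G1_def G2_def)
  have "lubell n G = (\<Sum>F\<in>G1. 1 / real (n choose card F)) + (\<Sum>F\<in>G2. 1 / real (n choose card F))"
    unfolding lubell_def G_split by (rule sum.union_disjoint[OF fin]) (auto simp: G1_def G2_def)
  also have "\<dots> = real (card G1) / real n + real (card G2) / real (n choose 2)"
    by (simp add: G1_def G2_def)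
  finally have lubell_G: "lubell n G = real (card G1) / real n + real (card G2) / real (n choose 2)" .
  have "G1 = (\<lambda>x. {x}) ` singleton_vertices G n"
    using G unfolding G1_def singleton_vertices_def by (auto simp: card_1_singleton_iff)
  then have card_G1: "card G1 = card (singleton_vertices G n)" by (simp add: card_image)
  have choose_2: "real (n choose 2) = real n * (real n - 1) / 2"
    using n by (simp add: choose_two of_nat_diff real_of_nat_div)
  have arcs: "real (arc_count (edge_adj G) {0..<n}) = 2 * real (card G2)"
    using arc_count_edge_adj[OF _ G] unfolding G2_def by simp
  have "real (card G2) / real (n choose 2)
      = real (arc_count (edge_adj G) {0..<n}) / (real n * (real n - 1))"
    unfolding choose_2 arcs by (simp add: mult.commute)
  then show ?thesis unfolding lubell_G card_G1 by simp
qed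

section \<open>Embedding into blow-ups and the Turan construction\<close>

lemma exists_embedding_into_parts:
  assumes V: "finite V" and c: "\<And>x. x \<in> V \<Longrightarrow> c x \<le> r"
    and P: "\<And>i. i \<le> r \<Longrightarrow> finite (P i) \<and> card (P i) = card V"
  obtains f where "\<And>x. x \<in> V \<Longrightarrow> f x \<in> P (c x)"
    and "\<And>x y. x \<in> V \<Longrightarrow> y \<in> V \<Longrightarrow> c x = c y \<Longrightarrow> f x = f y \<Longrightarrow> x = y"
proof -
  obtain idx where idx: "bij_betw idx V {0..<card V}" using ex_bij_betw_finite_nat[OF V] by blast
  have "\<exists>h. bij_betw h {0..<card V} (P i)" if "i \<le> r" for i
    using ex_bij_betw_nat_finite P[OF that] by metis
  then obtain enum where enum: "\<And>i. i \<le> r \<Longrightarrow> bij_betw (enum i) {0..<card V} (P i)"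
    by metis
  show thesis
  proof (rule that)
    show "enum (c x) (idx x) \<in> P (c x)" if "x \<in> V" for x
    proof -
      have "idx x \<in> {0..<card V}" using idx that by (meson bij_betwE)
      then show ?thesis using bij_betwE[OF enum[OF c[OF that]]] by blast
    qed
    show "x = y" if "x \<in> V" "y \<in> V" "c x = c y" "enum (c x) (idx x) = enum (c y) (idx y)" for x y
    proof -
      have "idx x \<in> {0..<card V}" "idx y \<in> {0..<card V}" using idx that(1,2) by (meson bij_betwE)+
      then have "idx x = idx y"
        using that(3,4) enum[OF c[OF that(1)]] unfolding bij_betw_def inj_on_def by metis
      then show ?thesis using idx that(1,2) unfolding bij_betw_def inj_on_def by blast
    qed
  qed
qed

text \<open>Colour class \<open>i\<close> is mapped into part \<open>i\<close>.\<close>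
lemma hyp_sub_of_clique_blowup:
  fixes V :: "'a set" and c :: "'a \<Rightarrow> nat" and n :: nat
  assumes V: "finite V" and E: "E \<subseteq> Pow V" and c: "\<And>x. x \<in> V \<Longrightarrow> c x \<le> r"
    and proper: "\<And>F x y. F \<in> E \<Longrightarrow> card F = 2 \<Longrightarrow> x \<in> F \<Longrightarrow> y \<in> F \<Longrightarrow> x \<noteq> y \<Longrightarrow> c x \<noteq> c y"
    and sizes: "\<And>F. F \<in> E \<Longrightarrow> card F = 1 \<or> card F = 2"
    and singletons: "\<And>F x. F \<in> E \<Longrightarrow> card F = 1 \<Longrightarrow> x \<in> W \<Longrightarrow> {x} \<in> G"
    and W: "W \<subseteq> {0..<n}" and blowup: "has_clique_blowup (edge_adj G) W r (card V)"
  shows "hyp_sub V E {0..<n} G"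
proof -
  obtain P where P: "\<And>i. i \<le> r \<Longrightarrow> P i \<subseteq> W \<and> card (P i) = card V"
    and P_joined: "\<And>i j x y. i \<le> r \<Longrightarrow> j \<le> r \<Longrightarrow> i \<noteq> j \<Longrightarrow> x \<in> P i \<Longrightarrow> y \<in> P j \<Longrightarrow> edge_adj G x y"
    using blowup unfolding has_clique_blowup_def by metis
  have P_finite: "finite (P i) \<and> card (P i) = card V" if "i \<le> r" for i
  proof -
    have "P i \<subseteq> {0..<n}" using P[OF that] W by (meson order_trans)
    then have "finite (P i)" by (rule finite_subset) simp
    then show ?thesis using P[OF that] by simp
  qed
  obtain f where f: "\<And>x. x \<in> V \<Longrightarrow> f x \<in> P (c x)"
    and f_inj_class: "\<And>x y. x \<in> V \<Longrightarrow> y \<in> V \<Longrightarrow> c x = c y \<Longrightarrow> f x = f y \<Longrightarrow> x = y"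
    using exists_embedding_into_parts[of V c r P, OF V c P_finite] by blast
  have adj: "edge_adj G (f x) (f y)" if "x \<in> V" "y \<in> V" "c x \<noteq> c y" for x y
    using P_joined[OF c[OF that(1)] c[OF that(2)] that(3) f[OF that(1)] f[OF that(2)]] .
  have f_W: "f x \<in> W" if "x \<in> V" for x
    using f[OF that] P[OF c[OF that]] by (auto simp del: atLeastLessThan_iff)
  have inj: "inj_on f V"
  proof (rule inj_onI)
    fix x y assume xy: "x \<in> V" "y \<in> V" "f x = f y"
    show "x = y"
    proof (cases "c x = c y")
      case True
      then show ?thesis by (rule f_inj_class[OF xy(1,2) _ xy(3)])
    next
      case False
      then have "edge_adj G (f x) (f y)" by (rule adj[OF xy(1,2)])
      then show ?thesis using edge_adj_irrefl xy(3) by metis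
    qed
  qed
  have "f ` V \<subseteq> W" using f_W by blast
  then have range: "f ` V \<subseteq> {0..<n}" using W by (rule order_trans)
  have edges: "f ` F \<in> G" if F: "F \<in> E" for F
  proof -
    have FV: "F \<subseteq> V" using F E by auto
    consider "card F = 1" | "card F = 2" using sizes[OF F] by blast
    then show ?thesis
    proof cases
      case 1
      then obtain x where x: "F = {x}" by (metis card_1_singletonE)
      have "f x \<in> W" using f_W[of x] x FV by simp
      then show ?thesis using singletons[OF F 1] x by simp
    next
      case 2
      then obtain x y where xy: "F = {x, y}" "x \<noteq> y" by (auto simp: card_2_iff)
      have "x \<in> V" "y \<in> V" using xy FV by auto
      moreover have "c x \<noteq> c y" using proper[OF F 2] xy by simp
      ultimately have "edge_adj G (f x) (f y)" by (rule adj)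
      then show ?thesis using xy unfolding edge_adj_def by simp
    qed
  qed
  show ?thesis unfolding hyp_sub_def using inj range edges by blast
qed

definition turan_graph :: "nat \<Rightarrow> nat \<Rightarrow> nat set set" where
  "turan_graph r n = {{i, j} | i j. i < n \<and> j < n \<and> i mod r \<noteq> j mod r}"

definition singletons :: "nat \<Rightarrow> nat set set" where
  "singletons n = {{i} | i. i < n}"

lemma card_turan_graph_edge: "F \<in> turan_graph r n \<Longrightarrow> card F = 2"
  unfolding turan_graph_def by (force simp: card_2_iff)

lemma turan_graph_Pow: "turan_graph r n \<subseteq> Pow {0..<n}"
  unfolding turan_graph_def by auto

lemma colourable_of_hyp_sub_turan:
  fixes V :: "'a set"
  assumes r: "0 < r" and E2: "\<And>F. F \<in> E2 \<Longrightarrow> card F = 2" "E2 \<subseteq> Pow V" "E2 \<subseteq> E"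
    and sub: "hyp_sub V E {0..<n} G" and G: "G \<subseteq> turan_graph r n \<union> singletons n"
  shows "colourable V E2 r"
proof -
  obtain f where f: "inj_on f V" "\<And>F. F \<in> E \<Longrightarrow> f ` F \<in> G"
    using sub unfolding hyp_sub_def by blast
  show ?thesis unfolding colourable_def
  proof (intro exI[of _ "\<lambda>x. f x mod r"] conjI ballI impI)
    show "(\<lambda>x. f x mod r) ` V \<subseteq> {..<r}" using r by auto
  next
    fix F x y assume F: "F \<in> E2" and xy: "x \<in> F" "y \<in> F" "x \<noteq> y"
    have "F = {x, y}" using E2(1)[OF F] xy by (auto simp: card_2_iff)
    moreover have "f x \<noteq> f y" using f(1) xy E2(2) F by (meson PowD inj_on_contraD subsetD)
    moreover have "f ` F \<in> G" using f(2) F E2(3) by blast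
    ultimately have "{f x, f y} \<in> turan_graph r n"
      using G unfolding singletons_def by auto
    then show "f x mod r \<noteq> f y mod r"
      unfolding turan_graph_def by (auto simp: doubleton_eq_iff)
  qed
qed

lemma card_residue_class_le: "0 < r \<Longrightarrow> card {j\<in>{0..<n}. j mod r = k} \<le> n div r + 1"
proof -
  assume r: "0 < r"
  have "card {j\<in>{0..<n}. j mod r = k} \<le> card {0..n div r}"
  proof (rule card_inj_on_le[where f="\<lambda>j. j div r"])
    show "inj_on (\<lambda>j. j div r) {j\<in>{0..<n}. j mod r = k}"
      unfolding inj_on_def by (metis (mono_tags, lifting) div_mult_mod_eq mem_Collect_eq)
    show "(\<lambda>j. j div r) ` {j\<in>{0..<n}. j mod r = k} \<subseteq> {0..n div r}"
      by (auto intro!: div_le_mono)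
  qed simp
  then show ?thesis by simp
qed

lemma arc_count_turan_graph_ge:
  assumes r: "0 < r" and G: "turan_graph r n \<subseteq> G"
  shows "real n * real n - real n * (real n / real r + 1) \<le> real (arc_count (edge_adj G) {0..<n})"
proof -
  define D where "D = {(i, j). i \<in> {0..<n} \<and> j \<in> {0..<n} \<and> i mod r \<noteq> j mod r}"
  define S where "S = {(i, j). i \<in> {0..<n} \<and> j \<in> {0..<n} \<and> i mod r = j mod r}"
  have "D \<subseteq> {(x, y). x \<in> {0..<n} \<and> y \<in> {0..<n} \<and> edge_adj G x y}"
  proof
    fix z assume "z \<in> D"
    then obtain i j where z: "z = (i, j)" "i < n" "j < n" "i mod r \<noteq> j mod r" unfolding D_def by auto
    then have "{i, j} \<in> G" using G unfolding turan_graph_def by blast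
    moreover have "i \<noteq> j" using z by auto
    ultimately show "z \<in> {(x, y). x \<in> {0..<n} \<and> y \<in> {0..<n} \<and> edge_adj G x y}"
      using z unfolding edge_adj_def by auto
  qed
  then have card_D: "card D \<le> arc_count (edge_adj G) {0..<n}"
    unfolding arc_count_def using arc_count_finite[of "{0..<n}" "edge_adj G"] by (intro card_mono) auto
  have DS: "D \<union> S = {0..<n} \<times> {0..<n}" "D \<inter> S = {}" unfolding D_def S_def by auto
  then have "finite (D \<union> S)" by simp
  then have "card (D \<union> S) = card D + card S" using DS(2) by (intro card_Un_disjoint) auto
  then have card_DS: "real (card D) + real (card S) = real n * real n"
    unfolding DS(1) by (simp add: card_cartesian_product flip: of_nat_add of_nat_mult)
  have "S = Sigma {0..<n} (\<lambda>i. {j\<in>{0..<n}. j mod r = i mod r})" unfolding S_def by auto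
  then have "card S = (\<Sum>i\<in>{0..<n}. card {j\<in>{0..<n}. j mod r = i mod r})"
    by (simp add: card_SigmaI)
  also have "\<dots> \<le> (\<Sum>i\<in>{0..<n}. n div r + 1)"
    using card_residue_class_le[OF r] by (intro sum_mono) auto
  finally have "card S \<le> n * (n div r + 1)" by simp
  then have "real (card S) \<le> real n * (real (n div r) + 1)"
    by (metis of_nat_1 of_nat_add of_nat_le_iff of_nat_mult)
  also have "\<dots> \<le> real n * (real n / real r + 1)"
    by (intro mult_left_mono) (auto simp: of_nat_div_le_of_nat)
  finally show ?thesis
    using card_D card_DS by linarith
qed


section \<open>Bounds on \<open>\<pi>\<^sub>n\<close>\<close>

lemma turan_density_arith:
  fixes r n d :: real
  assumes r: "1 \<le> r" and n: "2 \<le> n" and d: "n * n - n * (n / r + 1) \<le> d"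
  shows "(1 - 1 / r) - 1 / (n - 1) \<le> d / (n * (n - 1))"
proof -
  have "((1 - 1 / r) - 1 / (n - 1)) * (n * (n - 1)) = n * ((1 - 1 / r) * (n - 1) - 1)"
    using n by (simp add: field_simps)
  also have "\<dots> \<le> n * ((1 - 1 / r) * n - 1)"
    using r n by (intro mult_left_mono) (auto simp: field_simps)
  also have "\<dots> = n * n - n * (n / r + 1)" by (simp add: algebra_simps)
  also have "\<dots> \<le> d" by fact
  finally show ?thesis using n by (simp add: le_divide_eq)
qed

lemma graph_density_arith:
  fixes a e C n d :: real
  assumes a: "0 \<le> a" "a \<le> 1" and e: "0 < e" and C: "0 \<le> C"
    and n: "2 \<le> n" and large: "3 + 3 * e + C \<le> e * n" and d: "d \<le> (a + e) * n * (n + 1) + C"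
  shows "d / (n * (n - 1)) \<le> a + 2 * e"
proof -
  have "(3 + 3 * e + C) * n \<le> (e * n) * n" using large n by (intro mult_right_mono) auto
  moreover have "C \<le> C * n" "a * n \<le> n" using a C n by (simp_all add: mult_le_cancel_left1 mult_le_cancel_right1)
  ultimately have "d \<le> (a + 2 * e) * (n * (n - 1))" using d e n by (simp only: algebra_simps)
  then show ?thesis using n by (simp add: divide_le_eq)
qed

text \<open>For \<open>a \<ge> 1/2\<close> the bound \<open>x + a x\<^sup>2 + (1 - x\<^sup>2)\<close> on the density with a window of relative size
  \<open>x = s/n\<close> increases in \<open>x \<in> [0, 1]\<close>; this is where non-bipartiteness enters.\<close>
lemma window_density_arith:
  fixes a e C n s :: real
  assumes a: "1 / 2 \<le> a" "a \<le> 1" and e: "0 < e" and C: "0 \<le> C" and s: "0 \<le> s" "s \<le> n"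
    and n: "2 \<le> n" and large: "3 + 3 * e + C \<le> e * n"
  shows "s / n + ((a + e) * s * (s + 1) + C + n * n - s * s) / (n * (n - 1)) \<le> 1 + a + 2 * e"
proof -
  have "0 \<le> (n - s) * (a * n - (1 - a) * s)"
    using s a n by (intro mult_nonneg_nonneg) (auto intro!: mult_mono)
  moreover have "s * s \<le> n * n" using s by (intro mult_mono) auto
  moreover have "(a + e) * s \<le> (a + e) * n" using s a e by (intro mult_left_mono) auto
  moreover have "(3 + 3 * e + C) * n \<le> (e * n) * n" using large n by (intro mult_right_mono) auto
  moreover have "C \<le> C * n" "s \<le> s * n" "a * n \<le> n"
    using C s a n by (simp_all add: mult_le_cancel_left1 mult_le_cancel_right1)
  moreover have "e * (s * s) \<le> e * (n * n)" using \<open>s * s \<le> n * n\<close> e by simp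
  ultimately have "s * (n - 1) + ((a + e) * s * (s + 1) + C + n * n - s * s) \<le> (1 + a + 2 * e) * (n * (n - 1))"
    using e a s n by (simp only: algebra_simps)
  then have "(s * (n - 1) + ((a + e) * s * (s + 1) + C + n * n - s * s)) / (n * (n - 1)) \<le> 1 + a + 2 * e"
    using n by (simp add: divide_le_eq)
  moreover have "s / n = s * (n - 1) / (n * (n - 1))" using n by simp
  ultimately show ?thesis by (simp add: add_divide_distrib)
qed

lemma arc_count_le_window:
  assumes "S \<subseteq> W" "finite W"
  shows "real (arc_count adj W)
    \<le> real (arc_count adj S) + real (card W) * real (card W) - real (card S) * real (card S)"
proof -
  have finS: "finite S" using assms finite_subset by blast
  have "{(x, y). x \<in> W \<and> y \<in> W \<and> adj x y} \<subseteq> {(x, y). x \<in> S \<and> y \<in> S \<and> adj x y} \<union> (W \<times> W - S \<times> S)"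
    by auto
  then have "arc_count adj W \<le> card ({(x, y). x \<in> S \<and> y \<in> S \<and> adj x y} \<union> (W \<times> W - S \<times> S))"
    unfolding arc_count_def using assms arc_count_finite[OF finS, of adj] by (intro card_mono) auto
  also have "\<dots> \<le> arc_count adj S + card (W \<times> W - S \<times> S)"
    unfolding arc_count_def by (rule card_Un_le)
  also have "card (W \<times> W - S \<times> S) = card W * card W - card S * card S"
    using assms finS by (subst card_Diff_subset) (auto simp: card_cartesian_product)
  finally have "real (arc_count adj W) \<le> real (arc_count adj S + (card W * card W - card S * card S))"
    by (simp only: of_nat_le_iff)
  moreover have "card S * card S \<le> card W * card W"
    using card_mono[OF assms(2,1)] by (intro mult_mono) auto
  ultimately show ?thesis by (simp add: of_nat_diff)
qed

definition pi_n_candidates :: "'a set \<Rightarrow> 'a set set \<Rightarrow> nat \<Rightarrow> nat set set set" where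
  "pi_n_candidates V E n =
     {G. G \<subseteq> Pow {0..<n} \<and> edge_sizes G \<subseteq> edge_sizes E \<and> \<not> hyp_sub V E {0..<n} G}"

lemma pi_n_eq_Max: "pi_n V E n = Max (lubell n ` pi_n_candidates V E n)"
  unfolding pi_n_def pi_n_candidates_def by (intro arg_cong[where f = Max]) auto

lemma finite_pi_n_candidates: "finite (pi_n_candidates V E n)"
  unfolding pi_n_candidates_def by (rule finite_subset[of _ "Pow (Pow {0..<n})"]) auto

lemma lubell_le_pi_n: "G \<in> pi_n_candidates V E n \<Longrightarrow> lubell n G \<le> pi_n V E n"
  unfolding pi_n_eq_Max using finite_pi_n_candidates by (intro Max_ge) auto

text \<open>The empty hypergraph is a candidate once \<open>E \<noteq> {}\<close>, so the maximum is taken over a nonempty set.\<close>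
lemma pi_n_attained:
  assumes "E \<noteq> {}"
  obtains G where "G \<in> pi_n_candidates V E n" "pi_n V E n = lubell n G"
proof -
  have "{} \<in> pi_n_candidates V E n"
    using assms unfolding pi_n_candidates_def hyp_sub_def edge_sizes_def by auto
  then have "Max (lubell n ` pi_n_candidates V E n) \<in> lubell n ` pi_n_candidates V E n"
    using finite_pi_n_candidates by (intro Max_in) auto
  then show thesis using that unfolding pi_n_eq_Max by blast
qed

lemma LIMSEQ_of_bounds:
  fixes x :: "nat \<Rightarrow> real"
  assumes lower: "\<And>n. 2 \<le> n \<Longrightarrow> L - 1 / (real n - 1) \<le> x n"
    and upper: "\<And>\<delta>. 0 < \<delta> \<Longrightarrow> \<exists>N. \<forall>n\<ge>N. x n \<le> L + \<delta>"
  shows "x \<longlonglongrightarrow> L"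
proof (rule LIMSEQ_I)
  fix d :: real assume d: "0 < d"
  obtain N where N: "\<forall>n\<ge>N. x n \<le> L + d / 2" using upper[of "d / 2"] d by auto
  show "\<exists>no. \<forall>n\<ge>no. norm (x n - L) < d"
  proof (intro exI[of _ "max N (nat \<lceil>2 / d\<rceil> + 2)"] allI impI)
    fix n assume n: "max N (nat \<lceil>2 / d\<rceil> + 2) \<le> n"
    then have "1 / d < real n - 1" by linarith
    then have "1 < (real n - 1) * d" using d by (simp add: divide_less_eq)
    moreover have "0 < real n - 1" using n by linarith
    ultimately have "1 / (real n - 1) < d" by (simp add: divide_less_eq mult.commute)
    moreover have "L - 1 / (real n - 1) \<le> x n" using lower n by simp
    moreover have "x n \<le> L + d / 2" using N n by simp
    ultimately show "norm (x n - L) < d" using d by simp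
  qed
qed


lemma colourable_mono: "colourable V E k \<Longrightarrow> k \<le> k' \<Longrightarrow> colourable V E k'"
  unfolding colourable_def by (meson lessThan_subset_iff order_trans)

lemma colourable_card:
  assumes "finite V" "E \<subseteq> Pow V"
  shows "colourable V E (card V)"
proof -
  obtain idx where idx: "bij_betw idx V {0..<card V}" using ex_bij_betw_finite_nat[OF assms(1)] by blast
  show ?thesis unfolding colourable_def
  proof (intro exI[of _ idx] conjI ballI impI)
    show "idx ` V \<subseteq> {..<card V}" using idx unfolding bij_betw_def by auto
  next
    fix F x y assume "F \<in> E" "x \<in> F" "y \<in> F" "x \<noteq> y"
    then show "idx x \<noteq> idx y" using assms(2) idx unfolding bij_betw_def inj_on_def by blast
  qed
qed

lemma colourable_chromatic_number:
  assumes "finite V" "E \<subseteq> Pow V"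
  shows "colourable V E (chromatic_number V E)"
  unfolding chromatic_number_def using colourable_card[OF assms] by (rule LeastI)

lemma not_colourable_less_chromatic_number: "k < chromatic_number V E \<Longrightarrow> \<not> colourable V E k"
  unfolding chromatic_number_def by (rule not_less_Least)

lemma chromatic_number_not_bipartite:
  assumes "finite V" "E \<subseteq> Pow V" "\<not> bipartite V E"
  obtains r where "chromatic_number V E = Suc r" "2 \<le> r"
    "colourable V E (Suc r)" "\<not> colourable V E r"
proof -
  have col: "colourable V E (chromatic_number V E)" by (rule colourable_chromatic_number[OF assms(1,2)])
  have "3 \<le> chromatic_number V E"
  proof (rule ccontr)
    assume "\<not> 3 \<le> chromatic_number V E"
    then have "colourable V E 2" using colourable_mono[OF col] by simp
    then show False using assms(3) unfolding bipartite_def by contradiction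
  qed
  then obtain r where r: "chromatic_number V E = Suc r" "2 \<le> r"
    by (metis Suc_le_D numeral_3_eq_3 Suc_le_mono numeral_2_eq_2)
  moreover have "\<not> colourable V E r"
    using not_colourable_less_chromatic_number[of r V E] r(1) by simp
  ultimately show thesis using that col by simp
qed

lemma two_edges_two_edges: "two_edges (two_edges E) = two_edges E"
  unfolding two_edges_def by auto

locale chromatic_12_hypergraph =
  fixes V :: "'a set" and E :: "'a set set" and r :: nat
  assumes finite_V: "finite V" and E_Pow: "E \<subseteq> Pow V"
    and edge_card: "\<And>F. F \<in> E \<Longrightarrow> card F = 1 \<or> card F = 2"
    and r_pos: "0 < r"
    and colourable_Suc: "colourable V (two_edges E) (Suc r)"
    and not_colourable: "\<not> colourable V (two_edges E) r"
begin

lemma two_in_edge_sizes: "2 \<in> edge_sizes E"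
proof -
  have "two_edges E \<noteq> {}"
  proof
    assume "two_edges E = {}"
    then have "colourable V (two_edges E) r"
      unfolding colourable_def using r_pos by (intro exI[of _ "\<lambda>_. 0"]) auto
    then show False using not_colourable by contradiction
  qed
  then show ?thesis unfolding two_edges_def edge_sizes_def by auto
qed

lemma candidate_edge_card:
  assumes "G \<in> pi_n_candidates V E n" "F \<in> G"
  shows "card F = 1 \<or> card F = 2"
proof -
  have "card F \<in> edge_sizes E" using assms unfolding pi_n_candidates_def edge_sizes_def by auto
  then obtain F' where "F' \<in> E" "card F = card F'" unfolding edge_sizes_def by auto
  then show ?thesis using edge_card[of F'] by simp
qed

lemma not_hyp_sub_turan:
  assumes "G \<subseteq> turan_graph r n \<union> singletons n"
  shows "\<not> hyp_sub V E {0..<n} G"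
proof
  assume sub: "hyp_sub V E {0..<n} G"
  have "\<And>F. F \<in> two_edges E \<Longrightarrow> card F = 2" "two_edges E \<subseteq> Pow V" "two_edges E \<subseteq> E"
    unfolding two_edges_def using E_Pow by auto
  then have "colourable V (two_edges E) r"
    using colourable_of_hyp_sub_turan[OF r_pos _ _ _ sub assms] by blast
  then show False using not_colourable by contradiction
qed

lemma pi_n_ge_turan:
  assumes T: "turan_graph r n \<subseteq> G" and G: "G \<subseteq> turan_graph r n \<union> singletons n"
    and sizes: "edge_sizes G \<subseteq> edge_sizes E" and n: "2 \<le> n"
  shows "real (card (singleton_vertices G n)) / real n + (1 - 1 / real r) - 1 / (real n - 1) \<le> pi_n V E n"
proof -
  have "turan_graph r n \<union> singletons n \<subseteq> Pow {0..<n}"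
    using turan_graph_Pow[of r n] unfolding singletons_def by auto
  then have G_Pow: "G \<subseteq> Pow {0..<n}" using G by (rule order_trans[rotated])
  have G_card: "card F = 1 \<or> card F = 2" if "F \<in> G" for F
    using G that card_turan_graph_edge unfolding singletons_def by auto
  have "G \<in> pi_n_candidates V E n"
    using G_Pow sizes not_hyp_sub_turan[OF G] unfolding pi_n_candidates_def by blast
  then have "lubell n G \<le> pi_n V E n" by (rule lubell_le_pi_n)
  moreover have "(1 - 1 / real r) - 1 / (real n - 1)
      \<le> real (arc_count (edge_adj G) {0..<n}) / (real n * (real n - 1))"
    using arc_count_turan_graph_ge[OF r_pos T] n r_pos by (intro turan_density_arith) auto
  ultimately show ?thesis using lubell_12_graph[OF G_Pow G_card n] by linarith
qed

lemma arc_count_candidate_le: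
  assumes "0 < e"
  obtains C where "0 \<le> C"
    and "\<And>n G W. G \<in> pi_n_candidates V E n \<Longrightarrow> W \<subseteq> {0..<n} \<Longrightarrow>
      (\<And>F x. F \<in> E \<Longrightarrow> card F = 1 \<Longrightarrow> x \<in> W \<Longrightarrow> {x} \<in> G) \<Longrightarrow>
      real (arc_count (edge_adj G) W) \<le> (1 - 1 / real r + e) * real (card W) * (real (card W) + 1) + C"
proof -
  obtain c where c: "c ` V \<subseteq> {..<Suc r}" and proper: "\<forall>F\<in>two_edges E. \<forall>x\<in>F. \<forall>y\<in>F. x \<noteq> y \<longrightarrow> c x \<noteq> c y"
    using colourable_Suc unfolding colourable_def by blast
  have c_le: "c x \<le> r" if "x \<in> V" for x using c that by auto
  have c_proper: "c x \<noteq> c y" if "F \<in> E" "card F = 2" "x \<in> F" "y \<in> F" "x \<noteq> y" for F x y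
    using proper that unfolding two_edges_def by blast
  from erdos_stone[OF assms, of r "card V"] obtain C where C: "0 \<le> C \<and> (\<forall>(adj :: nat \<Rightarrow> nat \<Rightarrow> bool) W.
      (\<forall>x y. adj x y \<longrightarrow> adj y x) \<longrightarrow> (\<forall>x. \<not> adj x x) \<longrightarrow> finite W \<longrightarrow>
      \<not> has_clique_blowup adj W r (card V) \<longrightarrow>
      real (arc_count adj W) \<le> ((real r - 1) / real r + e) * real (card W) * (real (card W) + 1) + C)" ..
  have r_eq: "(real r - 1) / real r = 1 - 1 / real r" using r_pos by (simp add: diff_divide_distrib)
  show thesis
  proof (rule that)
    show "0 \<le> C" using C by blast
  next
    fix n G W assume G: "G \<in> pi_n_candidates V E n" and W: "W \<subseteq> {0..<n}"
      and sing: "\<And>F x. F \<in> E \<Longrightarrow> card F = 1 \<Longrightarrow> x \<in> W \<Longrightarrow> {x} \<in> G"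
    have no_blowup: "\<not> has_clique_blowup (edge_adj G) W r (card V)"
    proof
      assume blowup: "has_clique_blowup (edge_adj G) W r (card V)"
      have "hyp_sub V E {0..<n} G"
        by (rule hyp_sub_of_clique_blowup[where c = c and r = r and W = W and G = G and n = n,
            OF finite_V E_Pow c_le c_proper edge_card sing W blowup])
      then show False using G unfolding pi_n_candidates_def by blast
    qed
    have "finite W" using W finite_subset by blast
    have bound: "\<forall>(adj :: nat \<Rightarrow> nat \<Rightarrow> bool) W.
      (\<forall>x y. adj x y \<longrightarrow> adj y x) \<longrightarrow> (\<forall>x. \<not> adj x x) \<longrightarrow> finite W \<longrightarrow>
      \<not> has_clique_blowup adj W r (card V) \<longrightarrow>
      real (arc_count adj W) \<le> ((real r - 1) / real r + e) * real (card W) * (real (card W) + 1) + C"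
      using C by (rule conjunct2)
    have "real (arc_count (edge_adj G) W)
        \<le> ((real r - 1) / real r + e) * real (card W) * (real (card W) + 1) + C"
      by (rule bound[rule_format, of "edge_adj G" W, OF edge_adj_sym edge_adj_irrefl \<open>finite W\<close> no_blowup])
    then show "real (arc_count (edge_adj G) W) \<le> (1 - 1 / real r + e) * real (card W) * (real (card W) + 1) + C"
      unfolding r_eq .
  qed
qed

lemma pi_n_tendsto_graph:
  assumes graph: "\<And>F. F \<in> E \<Longrightarrow> card F = 2"
  shows "(\<lambda>n. pi_n V E n) \<longlonglongrightarrow> 1 - 1 / real r"
proof (rule LIMSEQ_of_bounds)
  fix n :: nat assume n: "2 \<le> n"
  have "edge_sizes (turan_graph r n) \<subseteq> edge_sizes E"
    using two_in_edge_sizes card_turan_graph_edge unfolding edge_sizes_def by auto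
  moreover have "singleton_vertices (turan_graph r n) n = {}"
    using card_turan_graph_edge unfolding singleton_vertices_def by fastforce
  ultimately show "1 - 1 / real r - 1 / (real n - 1) \<le> pi_n V E n"
    using pi_n_ge_turan[OF order_refl _ _ n] by simp
next
  fix \<delta> :: real assume "0 < \<delta>"
  define e where "e = \<delta> / 2"
  have e: "0 < e" using \<open>0 < \<delta>\<close> unfolding e_def by simp
  obtain C where C: "0 \<le> C" and arcs: "\<And>n G W. G \<in> pi_n_candidates V E n \<Longrightarrow> W \<subseteq> {0..<n} \<Longrightarrow>
      (\<And>F x. F \<in> E \<Longrightarrow> card F = 1 \<Longrightarrow> x \<in> W \<Longrightarrow> {x} \<in> G) \<Longrightarrow>
      real (arc_count (edge_adj G) W) \<le> (1 - 1 / real r + e) * real (card W) * (real (card W) + 1) + C"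
    using arc_count_candidate_le[OF e] by metis
  show "\<exists>N. \<forall>n\<ge>N. pi_n V E n \<le> 1 - 1 / real r + \<delta>"
  proof (intro exI[of _ "max 2 (nat \<lceil>(3 + 3 * e + C) / e\<rceil>)"] allI impI)
    fix n assume N: "max 2 (nat \<lceil>(3 + 3 * e + C) / e\<rceil>) \<le> n"
    then have n: "2 \<le> n" and "(3 + 3 * e + C) / e \<le> real n" by linarith+
    then have large: "3 + 3 * e + C \<le> e * real n" using e by (simp add: divide_le_eq mult.commute)
    have "E \<noteq> {}" using two_in_edge_sizes unfolding edge_sizes_def by auto
    then obtain G where G: "G \<in> pi_n_candidates V E n" "pi_n V E n = lubell n G"
      by (rule pi_n_attained)
    have G_Pow: "G \<subseteq> Pow {0..<n}" using G(1) unfolding pi_n_candidates_def by blast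
    have "card {x} \<in> edge_sizes E" if "{x} \<in> G" for x
      using G(1) that unfolding pi_n_candidates_def edge_sizes_def by blast
    then have "singleton_vertices G n = {}"
      using graph unfolding singleton_vertices_def edge_sizes_def by fastforce
    moreover have "real (arc_count (edge_adj G) {0..<n}) \<le> (1 - 1 / real r + e) * real n * (real n + 1) + C"
      using arcs[OF G(1) order_refl] graph by fastforce
    then have "real (arc_count (edge_adj G) {0..<n}) / (real n * (real n - 1)) \<le> 1 - 1 / real r + 2 * e"
      using r_pos e C n large by (intro graph_density_arith) auto
    ultimately have "lubell n G \<le> 1 - 1 / real r + 2 * e"
      using lubell_12_graph[OF G_Pow candidate_edge_card[OF G(1)] n] by simp
    then show "pi_n V E n \<le> 1 - 1 / real r + \<delta>" using G(2) unfolding e_def by simp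
  qed
qed

lemma pi_n_tendsto_with_singletons:
  assumes one: "1 \<in> edge_sizes E" and r: "2 \<le> r"
  shows "(\<lambda>n. pi_n V E n) \<longlonglongrightarrow> 2 - 1 / real r"
proof (rule LIMSEQ_of_bounds)
  fix n :: nat assume n: "2 \<le> n"
  have "edge_sizes (turan_graph r n \<union> singletons n) \<subseteq> edge_sizes E"
    using one two_in_edge_sizes card_turan_graph_edge unfolding edge_sizes_def singletons_def by auto
  moreover have "singleton_vertices (turan_graph r n \<union> singletons n) n = {0..<n}"
    unfolding singleton_vertices_def singletons_def by auto
  ultimately show "2 - 1 / real r - 1 / (real n - 1) \<le> pi_n V E n"
    using pi_n_ge_turan[where G = "turan_graph r n \<union> singletons n", OF _ order_refl _ n] n by simp
next
  fix \<delta> :: real assume "0 < \<delta>"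
  define e where "e = \<delta> / 2"
  have e: "0 < e" using \<open>0 < \<delta>\<close> unfolding e_def by simp
  obtain C where C: "0 \<le> C" and arcs: "\<And>n G W. G \<in> pi_n_candidates V E n \<Longrightarrow> W \<subseteq> {0..<n} \<Longrightarrow>
      (\<And>F x. F \<in> E \<Longrightarrow> card F = 1 \<Longrightarrow> x \<in> W \<Longrightarrow> {x} \<in> G) \<Longrightarrow>
      real (arc_count (edge_adj G) W) \<le> (1 - 1 / real r + e) * real (card W) * (real (card W) + 1) + C"
    using arc_count_candidate_le[OF e] by metis
  show "\<exists>N. \<forall>n\<ge>N. pi_n V E n \<le> 2 - 1 / real r + \<delta>"
  proof (intro exI[of _ "max 2 (nat \<lceil>(3 + 3 * e + C) / e\<rceil>)"] allI impI)
    fix n assume N: "max 2 (nat \<lceil>(3 + 3 * e + C) / e\<rceil>) \<le> n"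
    then have n: "2 \<le> n" and "(3 + 3 * e + C) / e \<le> real n" by linarith+
    then have large: "3 + 3 * e + C \<le> e * real n" using e by (simp add: divide_le_eq mult.commute)
    have "E \<noteq> {}" using two_in_edge_sizes unfolding edge_sizes_def by auto
    then obtain G where G: "G \<in> pi_n_candidates V E n" "pi_n V E n = lubell n G"
      by (rule pi_n_attained)
    have G_Pow: "G \<subseteq> Pow {0..<n}" using G(1) unfolding pi_n_candidates_def by blast
    define S where "S = singleton_vertices G n"
    define s where "s = card S"
    have S: "S \<subseteq> {0..<n}" unfolding S_def singleton_vertices_def by auto
    then have sn: "s \<le> n" unfolding s_def using card_mono[OF finite_atLeastLessThan S] by simp
    have "real (arc_count (edge_adj G) S) \<le> (1 - 1 / real r + e) * real s * (real s + 1) + C"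
      unfolding s_def by (rule arcs[OF G(1) S]) (simp add: S_def singleton_vertices_def)
    moreover have "real (arc_count (edge_adj G) {0..<n})
        \<le> real (arc_count (edge_adj G) S) + real n * real n - real s * real s"
      using arc_count_le_window[OF S] unfolding s_def by simp
    ultimately have "real (arc_count (edge_adj G) {0..<n})
        \<le> (1 - 1 / real r + e) * real s * (real s + 1) + C + real n * real n - real s * real s"
      by linarith
    then have "real (arc_count (edge_adj G) {0..<n}) / (real n * (real n - 1))
        \<le> ((1 - 1 / real r + e) * real s * (real s + 1) + C + real n * real n - real s * real s)
          / (real n * (real n - 1))"
      using n by (intro divide_right_mono) auto
    moreover have "real s / real n + ((1 - 1 / real r + e) * real s * (real s + 1) + C + real n * real n
        - real s * real s) / (real n * (real n - 1)) \<le> 1 + (1 - 1 / real r) + 2 * e"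
      using r e C n large sn by (intro window_density_arith) auto
    ultimately have "lubell n G \<le> 2 - 1 / real r + 2 * e"
      using lubell_12_graph[OF G_Pow candidate_edge_card[OF G(1)] n] unfolding S_def s_def by simp
    then show "pi_n V E n \<le> 2 - 1 / real r + \<delta>" using G(2) unfolding e_def by simp
  qed
qed

end

theorem mainTheorem7:
  fixes V :: "'a set" and E :: "'a set set"
  assumes "hypergraph V E"
    and "edge_sizes E = {1, 2}"
    and "\<not> bipartite V (two_edges E)"
  shows "(\<lambda>n. pi_n V E n) \<longlonglongrightarrow> 1 + lim (\<lambda>n. pi_n V (two_edges E) n)
     \<and> (\<lambda>n. pi_n V (two_edges E) n) \<longlonglongrightarrow>
           1 - 1 / (real (chromatic_number V (two_edges E)) - 1)
     \<and> (\<lambda>n. pi_n V E n) \<longlonglongrightarrow>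
           2 - 1 / (real (chromatic_number V (two_edges E)) - 1)"
proof -
  have V: "finite V" and E_Pow: "E \<subseteq> Pow V" using assms(1) unfolding hypergraph_def by auto
  have E2_Pow: "two_edges E \<subseteq> Pow V" using E_Pow unfolding two_edges_def by auto
  obtain r where \<chi>: "chromatic_number V (two_edges E) = Suc r" and r: "2 \<le> r"
    and col: "colourable V (two_edges E) (Suc r)" and not_col: "\<not> colourable V (two_edges E) r"
    using chromatic_number_not_bipartite[OF V E2_Pow assms(3)] by metis
  have edge_card: "card F = 1 \<or> card F = 2" if "F \<in> E" for F
    using assms(2) that unfolding edge_sizes_def by auto
  interpret H: chromatic_12_hypergraph V E r
    using V E_Pow edge_card col not_col r by unfold_locales auto
  interpret G: chromatic_12_hypergraph V "two_edges E" r
    using V E2_Pow col not_col r by unfold_locales (auto simp: two_edges_two_edges two_edges_def)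
  have graph: "(\<lambda>n. pi_n V (two_edges E) n) \<longlonglongrightarrow> 1 - 1 / real r"
    by (rule G.pi_n_tendsto_graph) (simp add: two_edges_def)
  have hypergraph: "(\<lambda>n. pi_n V E n) \<longlonglongrightarrow> 2 - 1 / real r"
    using assms(2) r by (intro H.pi_n_tendsto_with_singletons) auto
  show ?thesis using graph hypergraph limI[OF graph] \<chi> by simp
qed

end
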